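(* Let $p$ be a prime and let $\Gamma = \bigoplus_{i \in B_1} \mathbb{Q} \oplus \bigoplus_{i \in B_2} \mathcal{C}(p^\infty)$ for index sets $B_1, B_2$, regarded as a discrete abelian group. If $E \subset \Gamma$ is $p$-PR, then $|E| \le |B_1| + |B_2|$.
   Context: $\mathcal{C}(p^\infty)$ denotes the group of all $p^m$-th roots of unity, $m \ge 1$. For a discrete abelian group $\Delta$ with compact dual $\widehat{\Delta}$ and $N \in \mathbb{N}$, a subset $E \subset \Delta$ is $N$-PR if for every function $\varphi: E \to \mathbb{Z}_N$ (the $N$-th roots of unity in the unit circle) there exists $x \in \widehat{\Delta}$ with $\varphi(\gamma) = \gamma(x)$ for all $\gamma \in E$. *)

theory Defs
  imports Complex_Main "HOL-Library.Equipollence" "HOL-Computational_Algebra.Primes"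
begin

definition prufer :: "nat \<Rightarrow> complex set" where
  "prufer p = {z. \<exists>m\<ge>1. z ^ (p ^ m) = 1}"

definition roots_unity :: "nat \<Rightarrow> complex set" where
  "roots_unity N = {z. z ^ N = 1}"

text \<open>Elements are pairs (f, g) of finitely supported families; the Q-part is written
  additively, the C(p^infinity)-part multiplicatively (identity 1).\<close>
definition Gamma :: "nat \<Rightarrow> 'a set \<Rightarrow> 'b set \<Rightarrow> (('a \<Rightarrow> rat) \<times> ('b \<Rightarrow> complex)) set" where
  "Gamma p B1 B2 = {(f, g).
     finite {i. f i \<noteq> 0} \<and> {i. f i \<noteq> 0} \<subseteq> B1 \<and>
     finite {j. g j \<noteq> 1} \<and> {j. g j \<noteq> 1} \<subseteq> B2 \<and>
     (\<forall>j. g j \<in> prufer p)}"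

definition gamma_op :: "(('a \<Rightarrow> rat) \<times> ('b \<Rightarrow> complex)) \<Rightarrow> (('a \<Rightarrow> rat) \<times> ('b \<Rightarrow> complex))
    \<Rightarrow> (('a \<Rightarrow> rat) \<times> ('b \<Rightarrow> complex))" where
  "gamma_op x y = ((\<lambda>i. fst x i + fst y i), (\<lambda>j. snd x j * snd y j))"

text \<open>Elements of the dual group: characters of the discrete group Gamma, i.e. homomorphisms
  Gamma -> unit circle (every homomorphism is continuous since Gamma is discrete).
  The pairing gamma(x) of gamma in Gamma with x in the dual is chi gamma.\<close>
definition is_character :: "nat \<Rightarrow> 'a set \<Rightarrow> 'b set \<Rightarrow> ((('a \<Rightarrow> rat) \<times> ('b \<Rightarrow> complex)) \<Rightarrow> complex) \<Rightarrow> bool" where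
  "is_character p B1 B2 \<chi> \<longleftrightarrow>
     (\<forall>x\<in>Gamma p B1 B2. cmod (\<chi> x) = 1) \<and>
     (\<forall>x\<in>Gamma p B1 B2. \<forall>y\<in>Gamma p B1 B2. \<chi> (gamma_op x y) = \<chi> x * \<chi> y)"

definition N_PR :: "nat \<Rightarrow> nat \<Rightarrow> 'a set \<Rightarrow> 'b set \<Rightarrow> (('a \<Rightarrow> rat) \<times> ('b \<Rightarrow> complex)) set \<Rightarrow> bool" where
  "N_PR N p B1 B2 E \<longleftrightarrow>
     (\<forall>\<phi>. (\<forall>\<gamma>\<in>E. \<phi> \<gamma> \<in> roots_unity N) \<longrightarrow>
        (\<exists>\<chi>. is_character p B1 B2 \<chi> \<and> (\<forall>\<gamma>\<in>E. \<chi> \<gamma> = \<phi> \<gamma>)))"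

end

theory Submission
  imports Defs "HOL-Algebra.Free_Abelian_Groups"
begin

(* A p-PR set satisfies no integer relation with a coefficient prime to p: if the combination
   sum n_x x over finitely many x in E vanishes, take a character equal to exp(2 pi i/p) at x0
   and to 1 on the rest of E; applied to the combination it gives exp(2 pi i n_x0/p) = 1, so
   p divides n_x0.
   If B1 and B2 are finite, each element of Gamma is described by |B1| + |B2| rational
   coordinates (its Q-entries and the angles of its C(p^infinity)-entries, which are rational
   multiples of 2 pi), and more than |B1| + |B2| rational vectors of that length always satisfy
   an integer relation with a coefficient prime to p (eliminate one coordinate at a time,
   pivoting on an entry of least p-adic valuation).
   If B1 <+> B2 is infinite, an element of Gamma is determined by the finite graph of its
   nontrivial entries, a finite subset of (B1 <+> B2) x (Q <+> C(p^infinity)); as the second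
   factor is countable, |Gamma| <= |B1 <+> B2|. *)

section \<open>Integer relations with a coefficient prime to \<open>p\<close>\<close>

lemma exists_pivot_column:
  fixes p :: int and y :: "'i \<Rightarrow> int"
  assumes "prime p" and "I \<noteq> {}"
  obtains i0 u a where "i0 \<in> I" and "\<not> p dvd u" and "\<And>i. i \<in> I \<Longrightarrow> u * y i = a i * y i0"
proof (cases "\<forall>i\<in>I. y i = 0")
  case True
  obtain i0 where "i0 \<in> I" using assms(2) by blast
  with True \<open>prime p\<close> show ?thesis
    by (intro that[of i0 1 "\<lambda>_. 0"]) (auto simp: not_prime_unit)
next
  case False
  txt \<open>Pivot on a nonzero entry of least \<open>p\<close>-adic valuation; its \<open>p\<close>-part then
    divides every entry.\<close>
  then obtain i0 where i0: "i0 \<in> I" "y i0 \<noteq> 0"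
    and least: "\<And>i. i \<in> I \<Longrightarrow> y i \<noteq> 0 \<Longrightarrow> multiplicity p (y i0) \<le> multiplicity p (y i)"
    using ex_has_least_nat[of "\<lambda>i. i \<in> I \<and> y i \<noteq> 0" _ "\<lambda>i. multiplicity p (y i)"] by blast
  define v where "v = multiplicity p (y i0)"
  have not_unit: "\<not> is_unit p" using \<open>prime p\<close> not_prime_unit by blast
  have "p ^ v dvd y i" if "i \<in> I" for i
    using least[OF that] power_dvd_iff_le_multiplicity[OF _ not_unit] unfolding v_def
    by (cases "y i = 0") auto
  then have y: "y i = (y i div p ^ v) * p ^ v" if "i \<in> I" for i
    using that by simp
  have "\<not> p dvd y i0 div p ^ v"
    unfolding v_def using i0(2) not_unit by (rule multiplicity_decompose)
  moreover have "(y i0 div p ^ v) * y i = (y i div p ^ v) * y i0" if "i \<in> I" for i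
    using y[OF that] y[OF i0(1)] by (metis mult.assoc mult.commute)
  ultimately show ?thesis by (rule that[OF i0(1)])
qed

lemma exists_int_relation_not_dvd:
  fixes p :: int and x :: "'i \<Rightarrow> 'c \<Rightarrow> int"
  assumes "prime p" and "finite C" and "finite I" and "card C < card I"
  shows "\<exists>w. (\<forall>c\<in>C. (\<Sum>i\<in>I. w i * x i c) = 0) \<and> (\<exists>i\<in>I. \<not> p dvd w i)"
  using assms(2-4)
proof (induction C arbitrary: I x rule: finite_induct)
  case empty
  then obtain i0 where "i0 \<in> I" by fastforce
  with \<open>prime p\<close> show ?case
    by (intro exI[of _ "\<lambda>i. if i = i0 then 1 else 0"]) (auto simp: not_prime_unit)
next
  case (insert c C)
  then have "I \<noteq> {}" by auto
  then obtain i0 u a where i0: "i0 \<in> I" and u: "\<not> p dvd u"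
    and pivot: "\<And>i. i \<in> I \<Longrightarrow> u * x i c = a i * x i0 c"
    using exists_pivot_column[OF \<open>prime p\<close>, of I "\<lambda>i. x i c"] by blast
  txt \<open>The vectors \<open>x' i\<close> vanish at \<open>c\<close>; a relation among them lifts to the \<open>x i\<close> with
    coefficients \<open>u * w' i\<close>, which stay prime to \<open>p\<close> because \<open>u\<close> is.\<close>
  define I' where "I' = I - {i0}"
  define x' where "x' i d = u * x i d - a i * x i0 d" for i d
  have "card C < card I'"
    using insert.prems insert.hyps i0 by (simp add: I'_def)
  then obtain w' where w': "\<forall>d\<in>C. (\<Sum>i\<in>I'. w' i * x' i d) = 0"
    and "\<exists>i\<in>I'. \<not> p dvd w' i"
    using insert.IH[of I' x'] insert.prems by (auto simp: I'_def)
  then obtain j where j: "j \<in> I'" "\<not> p dvd w' j" by blast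
  define w where "w i = (if i = i0 then - (\<Sum>j\<in>I'. w' j * a j) else u * w' i)" for i
  have combination: "(\<Sum>i\<in>I. w i * x i d) = (\<Sum>i\<in>I'. w' i * x' i d)" for d
  proof -
    have "(\<Sum>i\<in>I. w i * x i d) = w i0 * x i0 d + (\<Sum>i\<in>I'. w i * x i d)"
      using i0 insert.prems by (simp add: I'_def sum.remove)
    also have "(\<Sum>i\<in>I'. w i * x i d) = (\<Sum>i\<in>I'. u * w' i * x i d)"
      by (rule sum.cong) (auto simp: w_def I'_def)
    also have "w i0 * x i0 d = - (\<Sum>j\<in>I'. w' j * a j * x i0 d)"
      by (simp add: w_def sum_distrib_right)
    finally show ?thesis
      by (simp add: x'_def sum_subtractf algebra_simps)
  qed
  have "x' i c = 0" if "i \<in> I'" for i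
    using pivot that by (simp add: x'_def I'_def)
  then have "\<forall>d\<in>insert c C. (\<Sum>i\<in>I. w i * x i d) = 0"
    using w' by (simp add: combination)
  moreover have "\<not> p dvd w j"
    using j u \<open>prime p\<close> by (auto simp: w_def I'_def prime_dvd_mult_iff)
  ultimately show ?case using j by (auto simp: I'_def)
qed

lemma rat_common_denominator:
  fixes S :: "rat set"
  assumes "finite S"
  shows "\<exists>D::int. D > 0 \<and> (\<forall>r\<in>S. of_int D * r \<in> \<int>)"
  using assms
proof (induction S rule: finite_induct)
  case empty
  show ?case by (intro exI[of _ 1]) simp
next
  case (insert r S)
  then obtain D where D: "D > 0" "\<forall>s\<in>S. of_int D * s \<in> \<int>" by blast
  obtain n d where nd: "quotient_of r = (n, d)" by fastforce
  then have "d > 0" and "of_int d * r = of_int n"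
    by (auto simp: quotient_of_denom_pos quotient_of_div[OF nd])
  then have "of_int (D * d) * r = of_int (D * n)"
    by (simp add: mult.assoc)
  moreover have "of_int (D * d) * s = of_int d * (of_int D * s)" for s :: rat
    by (simp add: mult_ac)
  ultimately have "of_int (D * d) * s \<in> \<int>" if "s \<in> insert r S" for s
    using that D(2) by (metis Ints_mult Ints_of_int insert_iff)
  then show ?case using D(1) \<open>d > 0\<close> by (intro exI[of _ "D * d"]) simp
qed

lemma exists_rat_relation_not_dvd:
  fixes p :: int and q :: "'i \<Rightarrow> 'c \<Rightarrow> rat"
  assumes "prime p" and "finite C" and "finite I" and "card C < card I"
  shows "\<exists>w. (\<forall>c\<in>C. (\<Sum>i\<in>I. of_int (w i) * q i c) = 0) \<and> (\<exists>i\<in>I. \<not> p dvd w i)"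
proof -
  obtain D where "D > 0" and D: "\<forall>r\<in>case_prod q ` (I \<times> C). of_int D * r \<in> \<int>"
    using rat_common_denominator[of "case_prod q ` (I \<times> C)"] assms(2,3) by blast
  define x where "x i c = \<lfloor>of_int D * q i c\<rfloor>" for i c
  have x: "of_int (x i c) = of_int D * q i c" if "i \<in> I" "c \<in> C" for i c
    using D that unfolding x_def by simp
  obtain w where w: "\<forall>c\<in>C. (\<Sum>i\<in>I. w i * x i c) = 0" and "\<exists>i\<in>I. \<not> p dvd w i"
    using exists_int_relation_not_dvd[OF assms] by blast
  have "of_int D * (\<Sum>i\<in>I. of_int (w i) * q i c) = 0" if "c \<in> C" for c
  proof -
    have "of_int D * (\<Sum>i\<in>I. of_int (w i) * q i c) = of_int (\<Sum>i\<in>I. w i * x i c)"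
      using x that by (simp add: sum_distrib_left mult.left_commute)
    then show ?thesis using w that by simp
  qed
  with \<open>D > 0\<close> show ?thesis using \<open>\<exists>i\<in>I. \<not> p dvd w i\<close> by auto
qed

section \<open>Integer combinations in \<open>Gamma\<close> and their characters\<close>

type_synonym ('a, 'b) gamma_elem = "('a \<Rightarrow> rat) \<times> ('b \<Rightarrow> complex)"

definition gamma_zero :: "('a, 'b) gamma_elem" where
  "gamma_zero = ((\<lambda>_. 0), (\<lambda>_. 1))"

definition gamma_scale :: "int \<Rightarrow> ('a, 'b) gamma_elem \<Rightarrow> ('a, 'b) gamma_elem" where
  "gamma_scale n x = ((\<lambda>i. of_int n * fst x i), (\<lambda>j. snd x j powi n))"

definition gamma_lincomb ::
    "(('a, 'b) gamma_elem \<Rightarrow> int) \<Rightarrow> ('a, 'b) gamma_elem set \<Rightarrow> ('a, 'b) gamma_elem" where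
  "gamma_lincomb w F =
     ((\<lambda>i. \<Sum>x\<in>F. of_int (w x) * fst x i), (\<lambda>j. \<Prod>x\<in>F. snd x j powi w x))"

lemma gamma_lincomb_empty [simp]: "gamma_lincomb w {} = gamma_zero"
  by (simp add: gamma_lincomb_def gamma_zero_def)

lemma gamma_lincomb_insert:
  "finite F \<Longrightarrow> x \<notin> F \<Longrightarrow>
    gamma_lincomb w (insert x F) = gamma_op (gamma_scale (w x) x) (gamma_lincomb w F)"
  by (simp add: gamma_lincomb_def gamma_scale_def gamma_op_def)

lemma prufer_nonzero: "p > 0 \<Longrightarrow> z \<in> prufer p \<Longrightarrow> z \<noteq> 0"
  by (auto simp: prufer_def power_0_left)

lemma one_in_prufer: "1 \<in> prufer p"
  by (auto simp: prufer_def)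

lemma prufer_mult_closed:
  assumes "z \<in> prufer p" and "u \<in> prufer p"
  shows "z * u \<in> prufer p"
proof -
  obtain m n where "m \<ge> 1" "z ^ p ^ m = 1" "u ^ p ^ n = 1"
    using assms by (auto simp: prufer_def)
  then have "z ^ p ^ (m + n) = 1" and "u ^ p ^ (n + m) = 1"
    by (simp_all add: power_add power_mult)
  then have "(z * u) ^ p ^ (m + n) = 1"
    by (simp add: power_mult_distrib add.commute)
  with \<open>m \<ge> 1\<close> show ?thesis
    by (auto simp: prufer_def intro!: exI[of _ "m + n"])
qed

lemma prufer_power_int_closed:
  assumes "z \<in> prufer p"
  shows "z powi n \<in> prufer p"
proof -
  obtain m where "m \<ge> 1" "z ^ p ^ m = 1"
    using assms by (auto simp: prufer_def)
  moreover have "(z powi n) ^ p ^ m = (z ^ p ^ m) powi n"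
    by (simp only: power_int_power' power_int_power mult.commute)
  ultimately show ?thesis
    by (auto simp: prufer_def)
qed

lemma Gamma_iff:
  "x \<in> Gamma p B1 B2 \<longleftrightarrow>
     finite {i. fst x i \<noteq> 0} \<and> {i. fst x i \<noteq> 0} \<subseteq> B1 \<and>
     finite {j. snd x j \<noteq> 1} \<and> {j. snd x j \<noteq> 1} \<subseteq> B2 \<and> (\<forall>j. snd x j \<in> prufer p)"
  by (cases x) (simp add: Gamma_def)

lemma Gamma_fst_eq_0: "x \<in> Gamma p B1 B2 \<Longrightarrow> i \<notin> B1 \<Longrightarrow> fst x i = 0"
  by (auto simp: Gamma_iff)

lemma Gamma_snd_in_prufer: "x \<in> Gamma p B1 B2 \<Longrightarrow> snd x j \<in> prufer p"
  by (simp add: Gamma_iff)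

lemma Gamma_snd_eq_1: "x \<in> Gamma p B1 B2 \<Longrightarrow> j \<notin> B2 \<Longrightarrow> snd x j = 1"
  by (auto simp: Gamma_iff)

lemma gamma_zero_in_Gamma: "gamma_zero \<in> Gamma p B1 B2"
  by (simp add: Gamma_iff gamma_zero_def one_in_prufer)

lemma gamma_op_in_Gamma:
  assumes "x \<in> Gamma p B1 B2" and "y \<in> Gamma p B1 B2"
  shows "gamma_op x y \<in> Gamma p B1 B2"
proof -
  have "{i. fst x i + fst y i \<noteq> 0} \<subseteq> {i. fst x i \<noteq> 0} \<union> {i. fst y i \<noteq> 0}"
    and "{j. snd x j * snd y j \<noteq> 1} \<subseteq> {j. snd x j \<noteq> 1} \<union> {j. snd y j \<noteq> 1}"
    by auto
  with assms show ?thesis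
    unfolding Gamma_iff gamma_op_def by (auto intro: prufer_mult_closed elim: finite_subset)
qed

lemma gamma_scale_in_Gamma:
  assumes "x \<in> Gamma p B1 B2"
  shows "gamma_scale n x \<in> Gamma p B1 B2"
proof -
  have "{i. of_int n * fst x i \<noteq> 0} \<subseteq> {i. fst x i \<noteq> 0}"
    and "{j. snd x j powi n \<noteq> 1} \<subseteq> {j. snd x j \<noteq> 1}"
    by auto
  with assms show ?thesis
    unfolding Gamma_iff gamma_scale_def
    by (auto intro: prufer_power_int_closed elim: finite_subset)
qed

lemma gamma_lincomb_in_Gamma:
  "finite F \<Longrightarrow> F \<subseteq> Gamma p B1 B2 \<Longrightarrow> gamma_lincomb w F \<in> Gamma p B1 B2"
  by (induction F rule: finite_induct)
    (auto simp: gamma_lincomb_insert gamma_zero_in_Gamma intro: gamma_op_in_Gamma gamma_scale_in_Gamma)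

lemma character_nonzero:
  "is_character p B1 B2 \<chi> \<Longrightarrow> x \<in> Gamma p B1 B2 \<Longrightarrow> \<chi> x \<noteq> 0"
  by (auto simp: is_character_def)

lemma character_gamma_op:
  "is_character p B1 B2 \<chi> \<Longrightarrow> x \<in> Gamma p B1 B2 \<Longrightarrow> y \<in> Gamma p B1 B2 \<Longrightarrow>
    \<chi> (gamma_op x y) = \<chi> x * \<chi> y"
  by (simp add: is_character_def)

lemma character_gamma_zero:
  assumes "is_character p B1 B2 \<chi>"
  shows "\<chi> gamma_zero = 1"
proof -
  have "gamma_op gamma_zero gamma_zero = gamma_zero"
    by (simp add: gamma_op_def gamma_zero_def)
  then have "\<chi> gamma_zero * \<chi> gamma_zero = \<chi> gamma_zero"
    using character_gamma_op[OF assms gamma_zero_in_Gamma gamma_zero_in_Gamma] by metis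
  then show ?thesis
    using character_nonzero[OF assms gamma_zero_in_Gamma] by simp
qed

lemma character_gamma_scale:
  assumes "p > 0" and \<chi>: "is_character p B1 B2 \<chi>" and x: "x \<in> Gamma p B1 B2"
  shows "\<chi> (gamma_scale n x) = \<chi> x powi n"
proof -
  have "snd x j \<noteq> 0" for j
    using prufer_nonzero[OF \<open>p > 0\<close> Gamma_snd_in_prufer[OF x]] .
  then have "gamma_scale (n + 1) x = gamma_op (gamma_scale n x) x" for n
    by (simp add: gamma_scale_def gamma_op_def distrib_right power_int_add_1)
  then have step: "\<chi> (gamma_scale (n + 1) x) = \<chi> (gamma_scale n x) * \<chi> x" for n
    using character_gamma_op[OF \<chi> gamma_scale_in_Gamma[OF x] x] by simp
  have nonzero: "\<chi> x \<noteq> 0"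
    using character_nonzero[OF \<chi> x] .
  show ?thesis
  proof (induction n rule: int_induct[where k = 0])
    case base
    have "gamma_scale 0 x = gamma_zero"
      by (simp add: gamma_scale_def gamma_zero_def)
    then show ?case using character_gamma_zero[OF \<chi>] by simp
  next
    case (step1 i)
    then show ?case using step nonzero by (simp add: power_int_add_1)
  next
    case (step2 i)
    then show ?case using step[of "i - 1"] nonzero
      by (simp add: power_int_diff field_simps)
  qed
qed

lemma character_gamma_lincomb:
  assumes "p > 0" and "is_character p B1 B2 \<chi>" and "finite F" and "F \<subseteq> Gamma p B1 B2"
  shows "\<chi> (gamma_lincomb w F) = (\<Prod>x\<in>F. \<chi> x powi w x)"
  using assms(3,4)
proof (induction F rule: finite_induct)
  case empty
  then show ?case using character_gamma_zero[OF assms(2)] by simp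
next
  case (insert x F)
  then show ?case
    using assms by (simp add: gamma_lincomb_insert character_gamma_op character_gamma_scale
        gamma_scale_in_Gamma gamma_lincomb_in_Gamma)
qed

lemma cis_2pi_eq_1_iff: "cis (2 * pi * r) = 1 \<longleftrightarrow> r \<in> \<int>"
proof
  assume "cis (2 * pi * r) = 1"
  then have "cos (2 * pi * r) = 1"
    by (simp add: complex_eq_iff)
  then obtain n :: int where "2 * pi * r = n * 2 * pi"
    by (auto simp: cos_one_2pi_int)
  then have "r = of_int n"
    by (simp add: mult.commute)
  then show "r \<in> \<int>" by simp
qed simp

lemma cis_power_int_eq_1_iff:
  assumes "N > 0"
  shows "cis (2 * pi / N) powi k = 1 \<longleftrightarrow> int N dvd k"
proof -
  have "cis (2 * pi / N) powi k = cis (2 * pi * (of_int k / N))"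
    by (simp add: cis_power_int field_simps)
  also have "\<dots> = 1 \<longleftrightarrow> of_int k / real N \<in> \<int>"
    by (rule cis_2pi_eq_1_iff)
  also have "\<dots> \<longleftrightarrow> int N dvd k"
    using assms by (auto simp: dvd_def field_simps elim!: Ints_cases)
      (metis of_int_eq_iff of_int_mult of_int_of_nat_eq)
  finally show ?thesis .
qed

lemma N_PR_lincomb_zero_dvd:
  assumes "N > 0" and "p > 0" and PR: "N_PR N p B1 B2 E" and "E \<subseteq> Gamma p B1 B2"
    and "finite F" and "F \<subseteq> E" and zero: "gamma_lincomb w F = gamma_zero" and "x0 \<in> F"
  shows "int N dvd w x0"
proof -
  define \<omega> where "\<omega> = cis (2 * pi / N)"
  define \<phi> where "\<phi> x = (if x = x0 then \<omega> else 1)" for x :: "('a, 'b) gamma_elem"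
  have "\<omega> ^ N = 1"
    using \<open>N > 0\<close> by (simp add: \<omega>_def DeMoivre)
  then have "\<forall>x\<in>E. \<phi> x \<in> roots_unity N"
    by (simp add: \<phi>_def roots_unity_def)
  then obtain \<chi> where \<chi>: "is_character p B1 B2 \<chi>" and \<chi>_E: "\<forall>x\<in>E. \<chi> x = \<phi> x"
    using PR unfolding N_PR_def by blast
  have "1 = \<chi> (gamma_lincomb w F)"
    using zero character_gamma_zero[OF \<chi>] by simp
  also have "\<dots> = (\<Prod>x\<in>F. \<chi> x powi w x)"
    using assms by (intro character_gamma_lincomb[OF \<open>p > 0\<close> \<chi>]) auto
  also have "\<dots> = (\<Prod>x\<in>F. \<phi> x powi w x)"
    using \<chi>_E \<open>F \<subseteq> E\<close> by (intro prod.cong) auto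
  also have "\<dots> = \<omega> powi w x0"
    using \<open>finite F\<close> \<open>x0 \<in> F\<close>
    by (simp add: \<phi>_def if_distrib[of "\<lambda>z. z powi _"] cong: if_cong)
  finally show ?thesis
    using cis_power_int_eq_1_iff[OF \<open>N > 0\<close>] by (simp add: \<omega>_def)
qed

section \<open>Finite \<open>B1\<close> and \<open>B2\<close>\<close>

lemma prufer_eq_cis_rat:
  assumes "p > 0" and "z \<in> prufer p"
  shows "\<exists>r::rat. z = cis (2 * pi * of_rat r)"
proof -
  obtain m where "z ^ p ^ m = 1"
    using assms(2) by (auto simp: prufer_def)
  then obtain k where "z = cis (2 * pi * real k / real (p ^ m))"
    using bij_betw_roots_unity[of "p ^ m"] \<open>p > 0\<close> by (auto simp: bij_betw_def)
  then have "z = cis (2 * pi * of_rat (of_nat k / of_nat (p ^ m)))"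
    by (simp add: of_rat_divide of_rat_power)
  then show ?thesis by blast
qed

lemma prod_cis: "(\<Prod>i\<in>I. cis (f i)) = cis (\<Sum>i\<in>I. f i)"
  by (induction I rule: infinite_finite_induct) (auto simp: cis_mult)

lemma Gamma_exists_lincomb_zero_not_dvd:
  assumes "prime p" and "finite B1" and "finite B2"
    and "finite F" and F: "F \<subseteq> Gamma p B1 B2" and card: "card B1 + card B2 < card F"
  shows "\<exists>w. gamma_lincomb w F = gamma_zero \<and> (\<exists>x\<in>F. \<not> int p dvd w x)"
proof -
  have "p > 0" using \<open>prime p\<close> prime_gt_0_nat by blast
  define angle where "angle x j = (SOME r. snd x j = cis (2 * pi * of_rat r))"
    for x :: "('a, 'b) gamma_elem" and j
  have angle: "snd x j = cis (2 * pi * of_rat (angle x j))" if "x \<in> F" for x j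
  proof -
    have "snd x j \<in> prufer p"
      using subsetD[OF F that] by (rule Gamma_snd_in_prufer)
    then show ?thesis
      unfolding angle_def by (rule someI_ex[OF prufer_eq_cis_rat[OF \<open>p > 0\<close>]])
  qed
  define q where "q x c = (case c of Inl i \<Rightarrow> fst x i | Inr j \<Rightarrow> angle x j)" for x c
  have "card (B1 <+> B2) < card F"
    using card assms(2,3) by (simp add: card_Plus)
  then obtain w where w: "\<forall>c\<in>B1 <+> B2. (\<Sum>x\<in>F. of_int (w x) * q x c) = 0"
    and not_dvd: "\<exists>x\<in>F. \<not> int p dvd w x"
    using exists_rat_relation_not_dvd[of "int p" "B1 <+> B2" F q] assms(1-4) by auto
  have "(\<Sum>x\<in>F. of_int (w x) * fst x i) = 0" for i
  proof (cases "i \<in> B1")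
    case True
    then show ?thesis using w[rule_format, OF InlI[OF True]] by (simp add: q_def)
  next
    case False
    have "fst x i = 0" if "x \<in> F" for x
      using subsetD[OF F that] False by (rule Gamma_fst_eq_0)
    then show ?thesis by simp
  qed
  moreover have "(\<Prod>x\<in>F. snd x j powi w x) = 1" for j
  proof (cases "j \<in> B2")
    case True
    have "(\<Prod>x\<in>F. snd x j powi w x) =
        (\<Prod>x\<in>F. cis (of_int (w x) * (2 * pi * of_rat (angle x j))))"
      by (rule prod.cong) (simp_all add: angle cis_power_int)
    also have "\<dots> = cis (\<Sum>x\<in>F. of_int (w x) * (2 * pi * of_rat (angle x j)))"
      by (rule prod_cis)
    also have "\<dots> = cis (2 * pi * of_rat (\<Sum>x\<in>F. of_int (w x) * angle x j))"
      by (simp add: of_rat_sum of_rat_mult sum_distrib_left mult_ac)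
    also have "\<dots> = 1"
      using w[rule_format, OF InrI[OF True]] by (simp add: q_def)
    finally show ?thesis .
  next
    case False
    have "snd x j = 1" if "x \<in> F" for x
      using subsetD[OF F that] False by (rule Gamma_snd_eq_1)
    then show ?thesis by simp
  qed
  ultimately have "gamma_lincomb w F = gamma_zero"
    by (simp add: gamma_lincomb_def gamma_zero_def)
  with not_dvd show ?thesis by blast
qed

lemma N_PR_finite_card_le:
  assumes "prime p" and "finite B1" and "finite B2"
    and "E \<subseteq> Gamma p B1 B2" and "N_PR p p B1 B2 E"
  shows "finite E \<and> card E \<le> card B1 + card B2"
proof (rule finite_if_finite_subsets_card_bdd)
  fix F assume "F \<subseteq> E" and "finite F"
  then have F: "F \<subseteq> Gamma p B1 B2"
    using assms(4) by blast
  have "p > 0"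
    using assms(1) prime_gt_0_nat by blast
  show "card F \<le> card B1 + card B2"
  proof (rule ccontr)
    assume "\<not> ?thesis"
    then have "card B1 + card B2 < card F" by simp
    then obtain w x where zero: "gamma_lincomb w F = gamma_zero"
      and "x \<in> F" and "\<not> int p dvd w x"
      using Gamma_exists_lincomb_zero_not_dvd[OF assms(1-3) \<open>finite F\<close> F] by blast
    moreover have "int p dvd w x"
      using \<open>p > 0\<close> \<open>p > 0\<close> assms(5,4) \<open>finite F\<close> \<open>F \<subseteq> E\<close> zero \<open>x \<in> F\<close>
      by (rule N_PR_lincomb_zero_dvd)
    ultimately show False by blast
  qed
qed

section \<open>Infinite \<open>B1 <+> B2\<close>\<close>

lemma countable_prufer:
  assumes "p > 0"
  shows "countable (prufer p)"
proof -
  have "prufer p \<subseteq> (\<Union>m. {z::complex. z ^ p ^ m = 1})"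
    by (auto simp: prufer_def)
  moreover have "finite {z::complex. z ^ p ^ m = 1}" for m
    using assms by (intro finite_roots_unity) simp
  then have "countable (\<Union>m. {z::complex. z ^ p ^ m = 1})"
    by (intro countable_UN) (simp_all add: countable_finite)
  ultimately show ?thesis
    by (rule countable_subset)
qed

lemma times_countable_eqpoll:
  assumes "infinite A" and "countable C" and "infinite C"
  shows "A \<times> C \<approx> A"
proof -
  have "|C| \<le>o |A|"
    using infinite_iff_card_of_countable assms by blast
  then have "|A \<times> C| =o |A|"
    using card_of_Times_infinite[of A C] assms infinite_imp_nonempty by blast
  then show ?thesis
    by (simp add: eqpoll_iff_card_of_ordIso)
qed

lemma Gamma_lepoll_infinite:
  assumes "p > 0" and inf: "infinite (B1 <+> B2)"
  shows "Gamma p B1 B2 \<lesssim> B1 <+> B2"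
proof -
  define C where "C = (UNIV :: rat set) <+> prufer p"
  define graph where "graph x = (\<lambda>i. (Inl i, Inl (fst x i))) ` {i. fst x i \<noteq> 0}
      \<union> (\<lambda>j. (Inr j, Inr (snd x j))) ` {j. snd x j \<noteq> 1}" for x :: "('a, 'b) gamma_elem"
  have graph_Inl: "(Inl i, Inl r) \<in> graph x \<longleftrightarrow> fst x i \<noteq> 0 \<and> r = fst x i"
    and graph_Inr: "(Inr j, Inr z) \<in> graph x \<longleftrightarrow> snd x j \<noteq> 1 \<and> z = snd x j" for x i r j z
    by (auto simp: graph_def)
  have "inj graph"
  proof (rule injI)
    fix x y assume eq: "graph x = graph y"
    have "fst x i = fst y i" for i
      using graph_Inl[of i _ x] graph_Inl[of i _ y] unfolding eq by metis
    moreover have "snd x j = snd y j" for j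
      using graph_Inr[of j _ x] graph_Inr[of j _ y] unfolding eq by metis
    ultimately show "x = y" by (simp add: prod_eq_iff fun_eq_iff)
  qed
  moreover have "graph \<in> Gamma p B1 B2 \<rightarrow> Fpow ((B1 <+> B2) \<times> C)"
    by (auto simp: graph_def Gamma_iff Fpow_def C_def)
  ultimately have "Gamma p B1 B2 \<lesssim> Fpow ((B1 <+> B2) \<times> C)"
    unfolding lepoll_def' by (meson inj_on_subset subset_UNIV)
  also have "Fpow ((B1 <+> B2) \<times> C) \<approx> (B1 <+> B2) \<times> C"
    using inf by (intro eqpoll_Fpow) (auto simp: C_def dest: finite_cartesian_productD1)
  also have "(B1 <+> B2) \<times> C \<approx> B1 <+> B2"
    using inf countable_prufer[OF \<open>p > 0\<close>]
    by (intro times_countable_eqpoll) (auto simp: C_def infinite_UNIV_char_0)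
  finally show ?thesis .
qed

theorem proposition3p6:
  fixes p :: nat and B1 :: "'a set" and B2 :: "'b set"
    and E :: "(('a \<Rightarrow> rat) \<times> ('b \<Rightarrow> complex)) set"
  assumes "prime p"
    and "E \<subseteq> Gamma p B1 B2"
    and "N_PR p p B1 B2 E"
  shows "E \<lesssim> B1 <+> B2"
proof (cases "finite B1 \<and> finite B2")
  case True
  then have "finite E" and "card E \<le> card B1 + card B2"
    using N_PR_finite_card_le[OF assms(1) _ _ assms(2,3)] by auto
  with True show ?thesis
    by (simp add: lepoll_iff_card_le card_Plus)
next
  case False
  then have "infinite (B1 <+> B2)" by simp
  have "E \<lesssim> Gamma p B1 B2"
    using assms(2) by (rule subset_imp_lepoll)
  also have "Gamma p B1 B2 \<lesssim> B1 <+> B2"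
    using Gamma_lepoll_infinite prime_gt_0_nat[OF assms(1)] \<open>infinite (B1 <+> B2)\<close> by blast
  finally show ?thesis .
qed

end
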